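(* Fix $\alpha\in(0,1)$. Let $u\in C([-1,1])$ be monotone. Then for every $\varepsilon>0$ there exists an $\alpha$-power piecewise linear function $g$ such that $|u(x)-g(x)|\le\varepsilon$ for all $x\in[-1,1]$.
   Context: A piecewise linear (PL) function is a continuous function $g:\mathbb{R}\to\mathbb{R}$ which is affine on each of finitely many intervals partitioning $\mathbb{R}$ (separated by finitely many breakpoints). A PL function $g$ is called $\alpha$-power PL if there is a constant $c\in\mathbb{R}$ such that the slope of every linear piece of $g$ lies in $\{c\alpha^k: k\in\mathbb{Z}\}$. *)

theory Defs
  imports "HOL-Analysis.Analysis"
begin

definition piece :: "real list \<Rightarrow> nat \<Rightarrow> real set" where
  "piece bs i =
     (if length bs = 0 then UNIV
      else if i = 0 then {..bs ! 0}
      else if i = length bs then {bs ! (length bs - 1)..}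
      else {bs ! (i - 1) .. bs ! i})"

definition pl_data :: "(real \<Rightarrow> real) \<Rightarrow> real list \<Rightarrow> real list \<Rightarrow> real list \<Rightarrow> bool" where
  "pl_data g bs ms cs \<longleftrightarrow>
     continuous_on UNIV g \<and> sorted_wrt (<) bs \<and>
     length ms = length bs + 1 \<and> length cs = length bs + 1 \<and>
     (\<forall>i \<le> length bs. \<forall>x \<in> piece bs i. g x = ms ! i * x + cs ! i)"

definition piecewise_linear :: "(real \<Rightarrow> real) \<Rightarrow> bool" where
  "piecewise_linear g \<longleftrightarrow> (\<exists>bs ms cs. pl_data g bs ms cs)"

definition alpha_power_pl :: "real \<Rightarrow> (real \<Rightarrow> real) \<Rightarrow> bool" where
  "alpha_power_pl \<alpha> g \<longleftrightarrow>
     (\<exists>bs ms cs c. pl_data g bs ms cs \<and>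
        (\<forall>m \<in> set ms. \<exists>k::int. m = c * \<alpha> powi k))"

end

theory Submission imports Defs begin

text \<open>For increasing u, pick a fine grid and target values z n = u(x n) + \<delta> n that increase
  strictly. On each grid cell the prescribed rise is realised by two consecutive linear pieces
  whose slopes are powers \<alpha>^k above and below the average slope, so the interpolant stays
  between its values at the cell ends; uniform continuity then makes it \<epsilon>-close to u.
  The decreasing case follows by negation, which only changes the constant c to -1.\<close>

text \<open>The bound on the breakpoints is what allows further pieces to be appended to the right.\<close>
definition power_pl_below :: "real \<Rightarrow> real \<Rightarrow> (real \<Rightarrow> real) \<Rightarrow> bool" where
  "power_pl_below \<alpha> A g \<longleftrightarrow>
     (\<exists>bs ms cs. pl_data g bs ms cs \<and> (\<forall>m\<in>set ms. \<exists>k::int. m = \<alpha> powi k) \<and> (\<forall>b\<in>set bs. b < A))"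

lemma power_pl_below_imp_alpha_power_pl: "power_pl_below \<alpha> A g \<Longrightarrow> alpha_power_pl \<alpha> g"
  unfolding power_pl_below_def alpha_power_pl_def by (metis mult_1)

lemma alpha_power_pl_uminus:
  assumes "alpha_power_pl \<alpha> g"
  shows "alpha_power_pl \<alpha> (\<lambda>x. - g x)"
proof -
  obtain bs ms cs c where pd: "pl_data g bs ms cs" and sl: "\<forall>m \<in> set ms. \<exists>k::int. m = c * \<alpha> powi k"
    using assms unfolding alpha_power_pl_def by blast
  have "pl_data (\<lambda>x. - g x) bs (map uminus ms) (map uminus cs)"
    using pd unfolding pl_data_def by (auto intro!: continuous_intros)
  moreover have "\<forall>m \<in> set (map uminus ms). \<exists>k::int. m = (-c) * \<alpha> powi k" using sl by auto
  ultimately show ?thesis unfolding alpha_power_pl_def by blast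
qed

lemma piece_snoc_subset:
  assumes "i \<le> length bs" "\<forall>b\<in>set bs. b \<le> a"
  shows "piece (bs @ [a]) i \<subseteq> piece bs i \<inter> {..a}"
proof (cases "i < length bs")
  case True
  then have "piece (bs @ [a]) i = piece bs i" "piece bs i \<subseteq> {..bs ! i}" "bs ! i \<le> a"
    using assms(2) by (auto simp: piece_def nth_append)
  then show ?thesis by auto
next
  case False
  with assms(1) show ?thesis by (cases "bs = []") (auto simp: piece_def nth_append)
qed

lemma piece_snoc_last: "piece (bs @ [a]) (Suc (length bs)) = {a..}"
  by (auto simp: piece_def nth_append)

definition extend_linear :: "(real \<Rightarrow> real) \<Rightarrow> real \<Rightarrow> real \<Rightarrow> real \<Rightarrow> real" where
  "extend_linear g a m x = g (min x a) + m * max 0 (x - a)"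

lemma extend_linear_left: "x \<le> a \<Longrightarrow> extend_linear g a m x = g x"
  by (simp add: extend_linear_def)

lemma extend_linear_right: "a \<le> x \<Longrightarrow> extend_linear g a m x = g a + m * (x - a)"
  by (simp add: extend_linear_def)

lemma power_pl_below_extend_linear:
  assumes "power_pl_below \<alpha> A g" "A \<le> a" "a < A'" "\<exists>k::int. m = \<alpha> powi k"
  shows "power_pl_below \<alpha> A' (extend_linear g a m)"
proof -
  obtain bs ms cs where pd: "pl_data g bs ms cs" and sl: "\<forall>m\<in>set ms. \<exists>k::int. m = \<alpha> powi k"
    and bA: "\<forall>b\<in>set bs. b < A" using assms(1) unfolding power_pl_below_def by blast
  have cont: "continuous_on UNIV g" and srt: "sorted_wrt (<) bs"
    and lm: "length ms = length bs + 1" and lc: "length cs = length bs + 1"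
    and pc: "\<forall>i \<le> length bs. \<forall>x \<in> piece bs i. g x = ms ! i * x + cs ! i"
    using pd unfolding pl_data_def by auto
  have ba: "\<forall>b\<in>set bs. b \<le> a" using bA assms(2) by force
  have "continuous_on UNIV (extend_linear g a m)"
    unfolding extend_linear_def by (intro continuous_intros continuous_on_compose2[OF cont]) auto
  moreover have "sorted_wrt (<) (bs @ [a])" using srt bA assms(2)
    by (auto simp: sorted_wrt_append)
  moreover have "extend_linear g a m x = (ms @ [m]) ! i * x + (cs @ [g a - m * a]) ! i"
    if i: "i \<le> length (bs @ [a])" and x: "x \<in> piece (bs @ [a]) i" for i x
  proof (cases "i \<le> length bs")
    case True
    with piece_snoc_subset[OF True ba] x have "x \<in> piece bs i" "x \<le> a" by auto
    then show ?thesis using pc True lm lc by (simp add: extend_linear_left nth_append)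
  next
    case False
    then have "i = Suc (length bs)" using i by auto
    then show ?thesis using x piece_snoc_last[of bs a] lm lc
      by (auto simp: extend_linear_right nth_append algebra_simps)
  qed
  ultimately have "pl_data (extend_linear g a m) (bs @ [a]) (ms @ [m]) (cs @ [g a - m * a])"
    unfolding pl_data_def using lm lc by simp
  moreover have "\<forall>b\<in>set (bs @ [a]). b < A'" using bA assms by force
  moreover have "\<forall>m\<in>set (ms @ [m]). \<exists>k::int. m = \<alpha> powi k" using sl assms(4) by auto
  ultimately show ?thesis unfolding power_pl_below_def by blast
qed

lemma exists_powi_gt:
  fixes \<alpha> s :: real
  assumes "0 < \<alpha>" "\<alpha> < 1"
  shows "\<exists>k::int. s < \<alpha> powi k"
proof -
  have "1 < 1 / \<alpha>" using one_less_inverse[OF assms] by (simp add: inverse_eq_divide)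
  then obtain n where "s < (1 / \<alpha>) ^ n" using real_arch_pow by blast
  then have "s < \<alpha> powi (- int n)" by (simp add: power_int_minus power_one_over inverse_eq_divide)
  then show ?thesis by blast
qed

lemma exists_powi_lt:
  fixes \<alpha> s :: real
  assumes "0 < \<alpha>" "\<alpha> < 1" "0 < s"
  shows "\<exists>k::int. \<alpha> powi k < s"
proof -
  obtain n where "\<alpha> ^ n < s" using real_arch_pow_inv[of s \<alpha>] assms by blast
  then have "\<alpha> powi (int n) < s" by simp
  then show ?thesis by blast
qed

lemma power_pl_below_rise:
  assumes "0 < \<alpha>" "\<alpha> < 1" "power_pl_below \<alpha> A g" "A \<le> x0" "0 < h" "0 < r"
  shows "\<exists>g'. power_pl_below \<alpha> (x0 + h) g' \<and> (\<forall>x\<le>x0. g' x = g x) \<and> g' (x0 + h) = g x0 + r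
     \<and> (\<forall>x\<in>{x0..x0 + h}. g x0 \<le> g' x \<and> g' x \<le> g x0 + r)"
proof -
  define s where "s = r / h"
  have s0: "0 < s" and sh: "s * h = r" using assms(5,6) by (auto simp: s_def)
  obtain k1 k2 :: int where k1: "s < \<alpha> powi k1" and k2: "\<alpha> powi k2 < s"
    using exists_powi_gt[OF assms(1,2)] exists_powi_lt[OF assms(1,2) s0] by blast
  define M m where "M = \<alpha> powi k1" and "m = \<alpha> powi k2"
  have m0: "0 < m" and sM: "m < s" "s < M" using assms(1) k1 k2 by (auto simp: M_def m_def)
  define t where "t = h * ((s - m) / (M - m))"
  have q: "0 < (s - m) / (M - m)" "(s - m) / (M - m) < 1" using sM by auto
  have t0: "0 < t" unfolding t_def using assms(5) q(1) by (rule mult_pos_pos)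
  have th: "t < h" unfolding t_def using mult_strict_left_mono[OF q(2) assms(5)] by simp
  have rise: "M * t + m * (h - t) = r"
  proof -
    have "(M - m) * t = h * (s - m)" unfolding t_def using sM by simp
    then show ?thesis using sh by (simp add: algebra_simps)
  qed
  define g' where "g' = extend_linear (extend_linear g x0 M) (x0 + t) m"
  have "power_pl_below \<alpha> (x0 + t) (extend_linear g x0 M)"
    by (rule power_pl_below_extend_linear[OF assms(3,4)]) (use t0 M_def in auto)
  then have "power_pl_below \<alpha> (x0 + h) g'"
    unfolding g'_def by (rule power_pl_below_extend_linear) (use th m_def in auto)
  moreover have left: "\<forall>x\<le>x0. g' x = g x" using t0 by (simp add: g'_def extend_linear_left)
  moreover have first: "\<forall>x\<in>{x0..x0 + t}. g' x = g x0 + M * (x - x0)"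
    by (simp add: g'_def extend_linear_left extend_linear_right)
  moreover have second: "\<forall>x\<in>{x0 + t..}. g' x = g x0 + M * t + m * (x - x0 - t)" using t0
    by (simp add: g'_def extend_linear_left extend_linear_right algebra_simps)
  moreover have "g' (x0 + h) = g x0 + r"
    using second[rule_format, of "x0 + h"] th rise by (simp add: algebra_simps)
  moreover have "g x0 \<le> g' x \<and> g' x \<le> g x0 + r" if x: "x \<in> {x0..x0 + h}" for x
  proof (cases "x \<le> x0 + t")
    case True
    have "M * (x - x0) \<le> M * t" "0 \<le> M * (x - x0)" "0 \<le> m * (h - t)"
      using True x sM s0 m0 th by (auto intro: mult_left_mono)
    then show ?thesis using first True x rise by auto
  next
    case False
    have "m * (x - x0 - t) \<le> m * (h - t)" "0 \<le> m * (x - x0 - t)" "0 \<le> M * t"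
      using False x m0 sM s0 t0 by (auto intro: mult_left_mono)
    then show ?thesis using second False rise by auto
  qed
  ultimately show ?thesis by blast
qed

lemma power_pl_below_interpolates_grid:
  fixes z :: "nat \<Rightarrow> real" and a h :: real
  assumes "0 < \<alpha>" "\<alpha> < 1" "0 < h" "\<And>n. n < N \<Longrightarrow> z n < z (Suc n)"
  shows "\<exists>g. power_pl_below \<alpha> (a + h * N) g \<and> g (a + h * N) = z N \<and>
    (\<forall>n<N. \<forall>x\<in>{a + h * n..a + h * Suc n}. z n \<le> g x \<and> g x \<le> z (Suc n))"
  using assms(4)
proof (induction N)
  case 0
  define g where "g x = z 0 + (x - a)" for x
  have "pl_data g [] [1] [z 0 - a]"
    unfolding pl_data_def g_def piece_def by (auto intro!: continuous_intros)
  moreover have "\<forall>m\<in>set [1::real]. \<exists>k::int. m = \<alpha> powi k" by (auto intro!: exI[of _ 0])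
  ultimately have "power_pl_below \<alpha> a g" unfolding power_pl_below_def by fastforce
  then show ?case by (auto simp: g_def)
next
  case (Suc N)
  define x0 where "x0 = a + h * N"
  obtain g where g: "power_pl_below \<alpha> x0 g" and gz: "g x0 = z N"
    and cells: "\<forall>n<N. \<forall>x\<in>{a + h * n..a + h * Suc n}. z n \<le> g x \<and> g x \<le> z (Suc n)"
    using Suc.IH Suc.prems unfolding x0_def by force
  have "0 < z (Suc N) - z N" using Suc.prems by simp
  from power_pl_below_rise[OF assms(1,2) g order_refl assms(3) this]
  obtain g' where g': "power_pl_below \<alpha> (x0 + h) g'" and left: "\<forall>x\<le>x0. g' x = g x"
    and end': "g' (x0 + h) = z (Suc N)"
    and last: "\<forall>x\<in>{x0..x0 + h}. z N \<le> g' x \<and> g' x \<le> z (Suc N)"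
    unfolding gz by auto
  have x0h: "x0 + h = a + h * Suc N" by (simp add: x0_def algebra_simps)
  have "z n \<le> g' x \<and> g' x \<le> z (Suc n)"
    if n: "n < Suc N" and x: "x \<in> {a + h * n..a + h * Suc n}" for n x
  proof (cases "n < N")
    case True
    have "h * Suc n \<le> h * N" using True assms(3) by (intro mult_left_mono) auto
    then have "x \<le> x0" using x by (simp add: x0_def)
    then show ?thesis using cells True x left by simp
  next
    case False
    then have "n = N" using n by simp
    then have "x \<in> {x0..x0 + h}" using x x0h by (simp add: x0_def)
    then show ?thesis using last \<open>n = N\<close> by simp
  qed
  then show ?case using g' end' x0h by auto
qed

lemma grid_cell_exists:
  fixes a h x :: real and N :: nat
  assumes "0 < h" "0 < N" "x \<in> {a..a + h * N}"
  shows "\<exists>n<N. x \<in> {a + h * n..a + h * Suc n}"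
  using assms(2,3)
proof (induction N)
  case (Suc N)
  show ?case
  proof (cases "0 < N \<and> x \<le> a + h * N")
    case True
    then show ?thesis using Suc.IH Suc.prems by (meson atLeastAtMost_iff less_SucI)
  next
    case False
    then have "a + h * N \<le> x" using Suc.prems by auto
    then show ?thesis using Suc.prems by (intro exI[of _ N]) auto
  qed
qed simp

lemma mono_on_approx_by_power_pl:
  fixes u :: "real \<Rightarrow> real"
  assumes "0 < \<alpha>" "\<alpha> < 1" "a < b" "continuous_on {a..b} u" "mono_on {a..b} u" "0 < \<epsilon>"
  shows "\<exists>g. alpha_power_pl \<alpha> g \<and> (\<forall>x \<in> {a..b}. \<bar>u x - g x\<bar> \<le> \<epsilon>)"
proof -
  obtain d where d0: "0 < d" and close: "\<And>x y. x \<in> {a..b} \<Longrightarrow> y \<in> {a..b} \<Longrightarrow>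
      dist y x < d \<Longrightarrow> dist (u y) (u x) < \<epsilon> / 2"
    using compact_uniformly_continuous[OF assms(4)] assms(6)
    unfolding uniformly_continuous_on_def by (metis compact_Icc half_gt_zero)
  obtain N :: nat where N: "(b - a) / d < real N" using reals_Archimedean2 by blast
  have N0: "0 < N" using N d0 assms(3) by (metis divide_pos_pos diff_gt_0_iff_gt gr0I of_nat_0 order.asym)
  define h where "h = (b - a) / N"
  define xs where "xs n = a + h * n" for n :: nat
  define \<delta> where "\<delta> = \<epsilon> / (2 * N)"
  define z where "z n = u (xs n) + \<delta> * n" for n :: nat
  have h0: "0 < h" and hd: "h < d" and hN: "h * N = b - a" and \<delta>N: "\<delta> * N = \<epsilon> / 2"
    using N N0 d0 assms(3) by (auto simp: h_def \<delta>_def field_simps)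
  have \<delta>0: "0 < \<delta>" using assms(6) N0 by (simp add: \<delta>_def)
  have xs_in: "xs n \<in> {a..b}" if "n \<le> N" for n
    using mult_left_mono[of "real n" "real N" h] that h0 hN by (auto simp: xs_def)
  text \<open>The term \<delta> n makes the targets strictly increasing even where u is constant.\<close>
  have "z n < z (Suc n)" if "n < N" for n
    using mono_onD[OF assms(5) xs_in xs_in, of n "Suc n"] that h0 \<delta>0
    by (simp add: z_def xs_def algebra_simps)
  then obtain g where g: "power_pl_below \<alpha> (a + h * N) g"
    and cells: "\<forall>n<N. \<forall>x\<in>{a + h * n..a + h * Suc n}. z n \<le> g x \<and> g x \<le> z (Suc n)"
    using power_pl_below_interpolates_grid[OF assms(1,2) h0, of N z a] by blast
  have "\<bar>u x - g x\<bar> \<le> \<epsilon>" if x: "x \<in> {a..b}" for x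
  proof -
    obtain n where n: "n < N" and xn: "x \<in> {xs n..xs (Suc n)}"
      using grid_cell_exists[OF h0 N0, of x a] x hN unfolding xs_def by auto
    have inc: "u (xs n) \<le> u x" "u x \<le> u (xs (Suc n))"
      using mono_onD[OF assms(5)] xs_in[of n] xs_in[of "Suc n"] n x xn by auto
    have "dist (xs (Suc n)) (xs n) < d" using h0 hd by (simp add: xs_def dist_real_def algebra_simps)
    then have "dist (u (xs (Suc n))) (u (xs n)) < \<epsilon> / 2"
      using close[of "xs n" "xs (Suc n)"] xs_in[of n] xs_in[of "Suc n"] n by simp
    then have "u (xs (Suc n)) - u (xs n) < \<epsilon> / 2" unfolding dist_real_def by linarith
    moreover have "0 \<le> \<delta> * n" "\<delta> * Suc n \<le> \<epsilon> / 2"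
      using \<delta>0 n \<delta>N mult_left_mono[of "real (Suc n)" "real N" \<delta>] by auto
    moreover have "z n \<le> g x" "g x \<le> z (Suc n)" using cells n xn unfolding xs_def by auto
    ultimately show ?thesis using inc unfolding z_def abs_le_iff by linarith
  qed
  then show ?thesis using power_pl_below_imp_alpha_power_pl[OF g] by blast
qed

lemma antimono_on_approx_by_power_pl:
  fixes u :: "real \<Rightarrow> real"
  assumes "0 < \<alpha>" "\<alpha> < 1" "a < b" "continuous_on {a..b} u" "antimono_on {a..b} u" "0 < \<epsilon>"
  shows "\<exists>g. alpha_power_pl \<alpha> g \<and> (\<forall>x \<in> {a..b}. \<bar>u x - g x\<bar> \<le> \<epsilon>)"
proof -
  have "mono_on {a..b} (\<lambda>x. - u x)"
    using assms(5) by (auto intro!: mono_onI dest: monotone_onD)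
  moreover have "continuous_on {a..b} (\<lambda>x. - u x)" using assms(4) by (intro continuous_intros)
  ultimately obtain g where "alpha_power_pl \<alpha> g" and "\<forall>x \<in> {a..b}. \<bar>- u x - g x\<bar> \<le> \<epsilon>"
    using mono_on_approx_by_power_pl[OF assms(1-3) _ _ assms(6)] by blast
  then show ?thesis
    by (intro exI[of _ "\<lambda>x. - g x"]) (auto simp: alpha_power_pl_uminus abs_minus_commute)
qed

theorem mainTheorem5:
  fixes \<alpha> :: real and u :: "real \<Rightarrow> real" and \<epsilon> :: real
  assumes "0 < \<alpha>" and "\<alpha> < 1"
    and "continuous_on {-1..1} u"
    and "mono_on {-1..1} u \<or> antimono_on {-1..1} u"
    and "\<epsilon> > 0"
  shows "\<exists>g. alpha_power_pl \<alpha> g \<and> (\<forall>x \<in> {-1..1}. \<bar>u x - g x\<bar> \<le> \<epsilon>)"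
  using assms(4) mono_on_approx_by_power_pl[OF assms(1,2) _ assms(3) _ assms(5)]
    antimono_on_approx_by_power_pl[OF assms(1,2) _ assms(3) _ assms(5)]
  by force

end
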